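(* Let $V\colon\mathbb{R}^2\to\mathbb{R}$ be continuous with $\inf_{\mathbb{R}^2}V>0$, and suppose that $H^1_V(\mathbb{R}^2)$ is continuously embedded in $L^\tau_V(\mathbb{R}^2)$ for some $\tau>2$. Assume that there exist $c_1>0$, $c_2>0$, $m>0$ and a sequence $\{x_n\}_n\subset\mathbb{R}^2$ with $|x_n|\to+\infty$ such that for every $n\ge1$, \[ c_1V(x_n)\le V(x)\le c_2V(x_n)\quad\text{for all }x\in B_{m/\sqrt{V(x_n)}}(x_n). \] Then $H^1_V(\mathbb{R}^2)$ is not compactly embedded in $L^\tau_V(\mathbb{R}^2)$.
   Context: $H^1_V(\mathbb{R}^2)$ is the completion of $C_0^\infty(\mathbb{R}^2)$ with respect to the norm $\|u\|_V=\left(\int_{\mathbb{R}^2}(|\nabla u|^2+V(x)|u|^2)\,dx\right)^{1/2}$. $L^\tau_V(\mathbb{R}^2)$ is the space of measurable $u$ with $\int_{\mathbb{R}^2}V(x)|u|^\tau dx<+\infty$, normed by $\left(\int V|u|^\tau\right)^{1/\tau}$. $B_r(x)$ is the open ball of radius $r$ centered at $x$. *)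

theory Defs
  imports "HOL-Analysis.Analysis"
begin

definition pd :: "2 \<Rightarrow> (real^2 \<Rightarrow> real) \<Rightarrow> real^2 \<Rightarrow> real" where
  "pd i f x = frechet_derivative f (at x) (axis i 1)"

definition smooth2 :: "(real^2 \<Rightarrow> real) \<Rightarrow> bool" where
  "smooth2 f \<longleftrightarrow> (\<forall>is :: 2 list. (foldr pd is f) differentiable_on UNIV)"

definition test_fun :: "(real^2 \<Rightarrow> real) \<Rightarrow> bool" where
  "test_fun f \<longleftrightarrow> smooth2 f \<and> compact (closure {x. f x \<noteq> 0})"

definition H1V_norm :: "(real^2 \<Rightarrow> real) \<Rightarrow> (real^2 \<Rightarrow> real) \<Rightarrow> real" where
  "H1V_norm V u = sqrt (\<integral>x. ((\<Sum>i\<in>UNIV. (pd i u x)\<^sup>2) + V x * (u x)\<^sup>2) \<partial>lborel)"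

definition LV_norm :: "(real^2 \<Rightarrow> real) \<Rightarrow> real \<Rightarrow> (real^2 \<Rightarrow> real) \<Rightarrow> real" where
  "LV_norm V \<tau> u = (\<integral>x. V x * \<bar>u x\<bar> powr \<tau> \<partial>lborel) powr (1 / \<tau>)"

text \<open>Continuous embedding H^1_V into L^tau_V: the inclusion is bounded on the dense
  subspace of test functions (equivalently, extends to a bounded operator).\<close>
definition cont_embedded :: "(real^2 \<Rightarrow> real) \<Rightarrow> real \<Rightarrow> bool" where
  "cont_embedded V \<tau> \<longleftrightarrow>
     (\<exists>C. \<forall>u. test_fun u \<longrightarrow> LV_norm V \<tau> u \<le> C * H1V_norm V u)"

text \<open>Compact embedding: (the continuous embedding maps) bounded sets to relatively compact
  sets; tested on H^1_V-bounded sequences of test functions, which must have a subsequence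
  that is Cauchy (hence convergent, L^tau_V being complete) in L^tau_V.\<close>
definition compactly_embedded :: "(real^2 \<Rightarrow> real) \<Rightarrow> real \<Rightarrow> bool" where
  "compactly_embedded V \<tau> \<longleftrightarrow> cont_embedded V \<tau> \<and>
     (\<forall>u :: nat \<Rightarrow> real^2 \<Rightarrow> real. (\<forall>n. test_fun (u n)) \<longrightarrow>
        (\<exists>B. \<forall>n. H1V_norm V (u n) \<le> B) \<longrightarrow>
        (\<exists>r :: nat \<Rightarrow> nat. strict_mono r \<and>
           (\<forall>e>0. \<exists>N. \<forall>m\<ge>N. \<forall>n\<ge>N. LV_norm V \<tau> (\<lambda>x. u (r m) x - u (r n) x) < e)))"

end

theory Submission
  imports Defs
begin

(* Put a smooth bump u_n of radius r_n = m / sqrt (V x_n) at each x_n. The radius is chosen so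
   that both parts of the H^1_V energy stay bounded: the gradient is O(1/r_n) on an area of order
   r_n^2, and V is comparable to V x_n = m^2 / r_n^2 there. On the other hand V |u_n|^tau has
   integral at least of order c1 m^2 on the half ball. Since the radii are bounded by
   m / sqrt (inf V) and |x_n| tends to infinity, the supports of u_a and u_b are disjoint once the
   centres are far apart, so the L^tau_V distance of u_a and u_b stays bounded below and no
   subsequence is Cauchy. *)

definition exp_neg_recip :: "nat \<Rightarrow> real \<Rightarrow> real" where
  "exp_neg_recip n t = (if t > 0 then (1/t)^n * exp (-1/t) else 0)"

lemma exp_neg_recip_nonneg: "0 \<le> exp_neg_recip n t"
  by (simp add: exp_neg_recip_def)

lemma exp_neg_recip_2_le: "exp_neg_recip 2 t \<le> 4"
proof (cases "t > 0")
  case True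
  define s where "s = 1/t"
  have "s/2 \<le> exp (s/2)" using exp_ge_add_one_self[of "s/2"] by linarith
  then have "(s/2)^2 \<le> exp (s/2) ^ 2" using True by (intro power_mono) (auto simp: s_def)
  also have "exp (s/2) ^ 2 = exp s" by (simp flip: exp_double)
  finally have "s^2 * exp (-s) \<le> 4" by (simp add: exp_minus field_simps)
  then show ?thesis using True by (simp add: exp_neg_recip_def s_def)
qed (simp add: exp_neg_recip_def)

lemma exp_neg_recip_tendsto_0: "(exp_neg_recip n \<longlongrightarrow> 0) (at 0)"
proof -
  have "((\<lambda>t. 0) \<longlongrightarrow> 0) (at_left (0::real))" by simp
  then have left: "(exp_neg_recip n \<longlongrightarrow> 0) (at_left 0)"
    by (rule tendsto_cong[THEN iffD1, rotated])
       (simp add: eventually_at_filter exp_neg_recip_def)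
  have "((\<lambda>t. inverse t ^ n / exp (inverse t)) \<longlongrightarrow> 0) (at_right (0::real))"
    by (rule filterlim_compose[OF tendsto_power_div_exp_0 filterlim_inverse_at_top_right])
  then have right: "(exp_neg_recip n \<longlongrightarrow> 0) (at_right 0)"
    by (rule tendsto_cong[THEN iffD1, rotated])
       (simp add: eventually_at_filter exp_neg_recip_def exp_minus inverse_eq_divide)
  show ?thesis using left right by (simp add: filterlim_at_split)
qed

lemma exp_neg_recip_has_real_derivative:
  "(exp_neg_recip n has_real_derivative
     exp_neg_recip (n+2) t - real n * exp_neg_recip (n+1) t) (at t)"
proof (cases t "0::real" rule: linorder_cases)
  case less
  have "((\<lambda>t. 0) has_real_derivative 0) (at t)" by simp
  then have "(exp_neg_recip n has_real_derivative 0) (at t)"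
    by (rule has_field_derivative_transform_within_open[of _ _ _ "{..<0}"])
       (use less in \<open>auto simp: exp_neg_recip_def\<close>)
  then show ?thesis using less by (simp add: exp_neg_recip_def)
next
  case equal
  \<comment> \<open>the difference quotient of the n-th function at 0 is the (n+1)-th function\<close>
  have "\<forall>\<^sub>F y in at 0. exp_neg_recip (n+1) y = (exp_neg_recip n y - exp_neg_recip n 0) / (y - 0)"
    by (simp add: eventually_at_filter exp_neg_recip_def)
  with exp_neg_recip_tendsto_0[of "n+1"]
  have "((\<lambda>y. (exp_neg_recip n y - exp_neg_recip n 0) / (y - 0)) \<longlongrightarrow> 0) (at 0)"
    by (rule tendsto_cong[THEN iffD1, rotated])
  then show ?thesis using equal by (simp add: has_field_derivative_iff exp_neg_recip_def)
next
  case greater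
  have "((\<lambda>t. (1/t)^n * exp (-1/t)) has_real_derivative
          exp_neg_recip (n+2) t - real n * exp_neg_recip (n+1) t) (at t)"
    using greater
    apply (auto intro!: derivative_eq_intros simp: exp_neg_recip_def)
    apply (cases n; auto simp: field_simps)
    done
  then show ?thesis
    by (rule has_field_derivative_transform_within_open[of _ _ _ "{0<..}"])
       (use greater in \<open>auto simp: exp_neg_recip_def\<close>)
qed

(* Closed under partial derivatives, since the family exp_neg_recip n is closed under
   differentiation; this is how smoothness of the bump is verified. *)
inductive elementary_smooth :: "(real^2 \<Rightarrow> real) \<Rightarrow> bool" where
  const: "elementary_smooth (\<lambda>x. a)"
| coord: "elementary_smooth (\<lambda>x. x $ i)"
| add: "elementary_smooth f \<Longrightarrow> elementary_smooth g \<Longrightarrow> elementary_smooth (\<lambda>x. f x + g x)"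
| mult: "elementary_smooth f \<Longrightarrow> elementary_smooth g \<Longrightarrow> elementary_smooth (\<lambda>x. f x * g x)"
| exp_neg_recip: "elementary_smooth f \<Longrightarrow> elementary_smooth (\<lambda>x. exp_neg_recip n (f x))"

lemma elementary_smooth_has_derivative:
  assumes "elementary_smooth f"
  obtains f' where "\<And>x. (f has_derivative f' x) (at x)"
    and "\<And>i. elementary_smooth (\<lambda>x. f' x (axis i 1))"
  using assms
proof (induction arbitrary: thesis)
  case (const a)
  show ?case by (rule const.prems[of "\<lambda>x h. 0"]) (auto intro: elementary_smooth.const)
next
  case (coord j)
  show ?case
    by (rule coord.prems[of "\<lambda>x h. h $ j"])
       (auto intro: bounded_linear.has_derivative[OF bounded_linear_vec_nth has_derivative_ident]
        elementary_smooth.const)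
next
  case (add f g)
  show ?case
  proof (rule add.IH(1), rule add.IH(2))
    fix f' g'
    assume "\<And>x. (f has_derivative f' x) (at x)" "\<And>i. elementary_smooth (\<lambda>x. f' x (axis i 1))"
      and "\<And>x. (g has_derivative g' x) (at x)" "\<And>i. elementary_smooth (\<lambda>x. g' x (axis i 1))"
    then show thesis
      by (intro add.prems[of "\<lambda>x h. f' x h + g' x h"] has_derivative_add elementary_smooth.add)
  qed
next
  case (mult f g)
  show ?case
  proof (rule mult.IH(1), rule mult.IH(2))
    fix f' g'
    assume "\<And>x. (f has_derivative f' x) (at x)" "\<And>i. elementary_smooth (\<lambda>x. f' x (axis i 1))"
      and "\<And>x. (g has_derivative g' x) (at x)" "\<And>i. elementary_smooth (\<lambda>x. g' x (axis i 1))"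
    then show thesis
      by (intro mult.prems[of "\<lambda>x h. f x * g' x h + f' x h * g x"] has_derivative_mult
          elementary_smooth.add elementary_smooth.mult mult.hyps)
  qed
next
  case (exp_neg_recip f n)
  let ?d = "\<lambda>t. exp_neg_recip (n+2) t + (- real n) * exp_neg_recip (n+1) t"
  have d: "(exp_neg_recip n has_derivative (\<lambda>h. ?d t * h)) (at t)" for t
    using exp_neg_recip_has_real_derivative[of n t] by (simp add: has_field_derivative_def)
  have d_smooth: "elementary_smooth (\<lambda>x. ?d (f x))"
    by (intro elementary_smooth.add elementary_smooth.mult elementary_smooth.const
        elementary_smooth.exp_neg_recip exp_neg_recip.hyps)
  show ?case
  proof (rule exp_neg_recip.IH)
    fix f'
    assume "\<And>x. (f has_derivative f' x) (at x)" "\<And>i. elementary_smooth (\<lambda>x. f' x (axis i 1))"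
    then show thesis
      by (intro exp_neg_recip.prems[of "\<lambda>x h. ?d (f x) * f' x h"] has_derivative_compose[OF _ d]
          elementary_smooth.mult d_smooth)
  qed
qed

lemma elementary_smooth_pd:
  assumes "elementary_smooth f"
  shows "elementary_smooth (pd i f)" and "f differentiable_on UNIV"
proof -
  obtain f' where f': "\<And>x. (f has_derivative f' x) (at x)"
    and smooth: "\<And>i. elementary_smooth (\<lambda>x. f' x (axis i 1))"
    using elementary_smooth_has_derivative[OF assms] by blast
  have "pd i f = (\<lambda>x. f' x (axis i 1))"
    using f' frechet_derivative_at by (metis pd_def)
  then show "elementary_smooth (pd i f)" using smooth by simp
  show "f differentiable_on UNIV"
    using f' by (auto simp: differentiable_on_def differentiable_def)
qed

lemma elementary_smooth_imp_smooth2: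
  assumes "elementary_smooth f"
  shows "smooth2 f"
proof -
  have "elementary_smooth (foldr pd is f)" for "is"
    by (induction "is") (simp_all add: assms elementary_smooth_pd(1))
  then show ?thesis
    unfolding smooth2_def using elementary_smooth_pd(2) by blast
qed

definition bump :: "'a::real_normed_vector \<Rightarrow> real \<Rightarrow> 'a \<Rightarrow> real" where
  "bump c r x = exp_neg_recip 0 (1 - (norm (x - c) / r)^2)"

lemma bump_neq_0_iff:
  assumes "r > 0"
  shows "bump c r x \<noteq> 0 \<longleftrightarrow> x \<in> ball c r"
proof -
  have "bump c r x \<noteq> 0 \<longleftrightarrow> (norm (x - c) / r)^2 < 1"
    by (simp add: bump_def exp_neg_recip_def)
  also have "\<dots> \<longleftrightarrow> norm (x - c) / r < 1"
    using assms by (simp add: abs_square_less_1)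
  also have "\<dots> \<longleftrightarrow> x \<in> ball c r"
    using assms by (simp add: dist_norm norm_minus_commute)
  finally show ?thesis .
qed

lemma bump_nonneg: "0 \<le> bump c r x"
  by (simp add: bump_def exp_neg_recip_nonneg)

lemma bump_le_1: "bump c r x \<le> 1"
  by (simp add: bump_def exp_neg_recip_def)

lemma bump_ge_on_half_ball:
  assumes "r > 0" and "x \<in> ball c (r/2)"
  shows "exp (-4/3) \<le> bump c r x"
proof -
  let ?t = "1 - (norm (x - c) / r)^2"
  have "norm (x - c) / r < 1/2"
    using assms by (simp add: dist_norm norm_minus_commute divide_simps)
  then have "(norm (x - c) / r)^2 < (1/2)^2"
    using assms by (intro power_strict_mono) auto
  then have t: "3/4 < ?t" by (simp add: power_divide)
  have "1 / ?t < 1 / (3/4)"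
    using t by (intro divide_strict_left_mono) auto
  then show ?thesis using t by (simp add: bump_def exp_neg_recip_def)
qed

lemma has_derivative_bump:
  fixes c :: "'a::real_inner"
  assumes "r \<noteq> 0"
  shows "(bump c r has_derivative
          (\<lambda>h. - 2 / r^2 * exp_neg_recip 2 (1 - (norm (x - c) / r)^2) * ((x - c) \<bullet> h))) (at x)"
proof -
  have outer: "(exp_neg_recip 0 has_derivative (\<lambda>h. exp_neg_recip 2 t * h)) (at t)" for t
    using exp_neg_recip_has_real_derivative[of 0 t]
    by (simp add: has_field_derivative_def numeral_2_eq_2)
  have inner: "((\<lambda>x. 1 - (x - c) \<bullet> (x - c) / r^2) has_derivative
                (\<lambda>h. - 2 / r^2 * ((x - c) \<bullet> h))) (at x)"
    using assms
    by (auto intro!: derivative_eq_intros simp: fun_eq_iff inner_commute field_simps eval_nat_numeral)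
  have "bump c r = (\<lambda>x. exp_neg_recip 0 (1 - (x - c) \<bullet> (x - c) / r^2))"
    by (simp add: fun_eq_iff bump_def power_divide power2_norm_eq_inner)
  then show ?thesis
    using has_derivative_compose[OF inner outer]
    by (simp add: power_divide power2_norm_eq_inner mult.assoc mult.left_commute)
qed

lemma elementary_smooth_bump: "elementary_smooth (bump (c::real^2) r)"
proof -
  have "(norm (x - c) / r)^2 =
          1 / r^2 * ((x$1 + - c$1) * (x$1 + - c$1) + (x$2 + - c$2) * (x$2 + - c$2))" for x
    by (simp add: power_divide power2_norm_eq_inner inner_vec_def sum_2)
  then have eq: "bump c r = (\<lambda>x. exp_neg_recip 0 (1 + (- (1 / r^2)) *
          ((x$1 + - c$1) * (x$1 + - c$1) + (x$2 + - c$2) * (x$2 + - c$2))))"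
    by (simp add: fun_eq_iff bump_def)
  show ?thesis
    unfolding eq by (intro elementary_smooth.intros)
qed

lemma test_fun_bump:
  assumes "r > 0"
  shows "test_fun (bump (c::real^2) r)"
proof -
  have "{x. bump c r x \<noteq> 0} = ball c r"
    using bump_neq_0_iff[OF assms] by blast
  then have "bounded {x. bump c r x \<noteq> 0}" by simp
  then show ?thesis
    unfolding test_fun_def
    by (simp add: elementary_smooth_imp_smooth2 elementary_smooth_bump)
qed

lemma pd_bump_sq_le:
  assumes "r > 0"
  shows "(pd i (bump c r) x)^2 \<le> 64 / r^2 * indicator (ball c r) x"
proof -
  let ?t = "1 - (norm (x - c) / r)^2"
  have "frechet_derivative (bump c r) (at x) = (\<lambda>h. - 2 / r^2 * exp_neg_recip 2 ?t * ((x - c) \<bullet> h))"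
    using assms by (intro frechet_derivative_at[symmetric] has_derivative_bump) simp
  then have pd: "pd i (bump c r) x = - 2 / r^2 * exp_neg_recip 2 ?t * (x - c) $ i"
    by (simp add: pd_def inner_axis)
  show ?thesis
  proof (cases "x \<in> ball c r")
    case True
    have "\<bar>pd i (bump c r) x\<bar> = 2 / r^2 * exp_neg_recip 2 ?t * \<bar>(x - c) $ i\<bar>"
      by (simp add: pd abs_mult exp_neg_recip_nonneg)
    also have "\<dots> \<le> 2 / r^2 * 4 * norm (x - c)"
      using exp_neg_recip_2_le exp_neg_recip_nonneg component_le_norm_cart[of "x - c" i]
      by (intro mult_mono mult_left_mono) auto
    also have "\<dots> \<le> 2 / r^2 * 4 * r"
      using True by (intro mult_left_mono) (auto simp: dist_norm norm_minus_commute)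
    finally have "\<bar>pd i (bump c r) x\<bar> \<le> 8 / r"
      using assms by (simp add: power2_eq_square)
    then have "\<bar>pd i (bump c r) x\<bar>^2 \<le> (8 / r)^2"
      by (intro power_mono) auto
    then show ?thesis
      using True by (simp add: power_divide)
  next
    case False
    then have "?t \<le> 0"
      using bump_neq_0_iff[OF assms, of c x]
      by (auto simp: bump_def exp_neg_recip_def split: if_splits)
    then show ?thesis
      using False by (simp add: pd exp_neg_recip_def)
  qed
qed

lemma continuous_on_bump:
  fixes c :: "'a::real_inner"
  assumes "r \<noteq> 0"
  shows "continuous_on S (bump c r)"
  by (intro continuous_at_imp_continuous_on ballI
      has_derivative_continuous[OF has_derivative_bump[OF assms]])

lemma H1V_norm_bump_le:
  fixes V :: "real^2 \<Rightarrow> real"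
  assumes r: "r > 0" and V_nonneg: "\<And>x. 0 \<le> V x" and V_le: "\<And>x. x \<in> ball c r \<Longrightarrow> V x \<le> C"
  shows "H1V_norm V (bump c r) \<le> sqrt (pi * (128 + C * r^2))"
proof -
  have "0 \<le> C" using V_nonneg[of c] V_le[of c] r by simp
  let ?B = "\<lambda>x. (128 / r^2 + C) * indicator (ball c r) x"
  have "(\<integral>x. (\<Sum>i\<in>UNIV. (pd i (bump c r) x)\<^sup>2) + V x * (bump c r x)\<^sup>2 \<partial>lborel)
        \<le> (\<integral>x. ?B x \<partial>lborel)"
  proof (rule integral_mono')
    show "integrable lborel ?B"
      using emeasure_lborel_ball_finite[of c r]
      by (intro integrable_mult_right integrable_real_indicator) simp_all
  next
    fix x
    show "0 \<le> ?B x" using \<open>0 \<le> C\<close> by simp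
    have grad: "(\<Sum>i\<in>UNIV. (pd i (bump c r) x)\<^sup>2) \<le> 128 / r^2 * indicator (ball c r) x"
      using pd_bump_sq_le[OF r, of 1 c x] pd_bump_sq_le[OF r, of 2 c x] by (simp add: sum_2)
    have pot: "V x * (bump c r x)\<^sup>2 \<le> C * indicator (ball c r) x"
    proof (cases "x \<in> ball c r")
      case True
      have "(bump c r x)\<^sup>2 \<le> 1"
        by (intro power_le_one bump_nonneg bump_le_1)
      then have "V x * (bump c r x)\<^sup>2 \<le> V x"
        using V_nonneg by (simp add: mult_left_le)
      also have "V x \<le> C" using True by (rule V_le)
      finally show ?thesis using True by simp
    qed (use bump_neq_0_iff[OF r, of c x] in simp)
    show "(\<Sum>i\<in>UNIV. (pd i (bump c r) x)\<^sup>2) + V x * (bump c r x)\<^sup>2 \<le> ?B x"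
      using grad pot by (simp add: algebra_simps)
  qed
  also have "(\<integral>x. ?B x \<partial>lborel) = (128 / r^2 + C) * (r^2 * pi)"
    using r by (simp add: circle_area)
  also have "\<dots> = pi * (128 + C * r^2)"
    using r by (simp add: field_simps)
  finally show ?thesis
    unfolding H1V_norm_def by (rule real_sqrt_le_mono)
qed

lemma LV_norm_diff_bumps_ge:
  fixes V :: "real^2 \<Rightarrow> real"
  assumes ra: "ra > 0" and rb: "rb > 0" and disjoint: "ball ca ra \<inter> ball cb rb = {}"
    and \<tau>: "\<tau> > 0" and V_cont: "continuous_on UNIV V" and V_nonneg: "\<And>x. 0 \<le> V x"
    and V_ge: "\<And>x. x \<in> ball cb rb \<Longrightarrow> C \<le> V x" and C: "C > 0"
  shows "(C * rb^2 / 4 * exp (-4/3) powr \<tau> * pi) powr (1/\<tau>)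
         \<le> LV_norm V \<tau> (\<lambda>x. bump ca ra x - bump cb rb x)"
proof -
  let ?G = "\<lambda>x. V x * \<bar>bump ca ra x - bump cb rb x\<bar> powr \<tau>"
  let ?S = "cball ca ra \<union> cball cb rb"
  have "continuous_on ?S ?G"
    using ra rb \<tau>
    by (intro continuous_intros continuous_on_powr' continuous_on_subset[OF V_cont]
        continuous_on_bump) auto
  then have "integrable lborel (\<lambda>x. indicator ?S x *\<^sub>R ?G x)"
    by (intro borel_integrable_compact) auto
  moreover have "bump ca ra x = 0" "bump cb rb x = 0" if "x \<notin> ?S" for x
    using that bump_neq_0_iff[OF ra, of ca x] bump_neq_0_iff[OF rb, of cb x] by auto
  then have "(\<lambda>x. indicator ?S x *\<^sub>R ?G x) = ?G"
    using \<tau> by (auto simp: fun_eq_iff indicator_def)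
  ultimately have G_integrable: "integrable lborel ?G" by simp
  let ?e = "exp (-4/3) powr \<tau>"
  have "(\<integral>x. C * ?e * indicator (ball cb (rb/2)) x \<partial>lborel) \<le> (\<integral>x. ?G x \<partial>lborel)"
  proof (rule integral_mono'[OF G_integrable])
    fix x
    show "0 \<le> ?G x" using V_nonneg by simp
    show "C * ?e * indicator (ball cb (rb/2)) x \<le> ?G x"
    proof (cases "x \<in> ball cb (rb/2)")
      case True
      then have "x \<in> ball cb rb" using subset_ball[of "rb/2" rb cb] rb by auto
      then have "bump ca ra x = 0"
        using disjoint bump_neq_0_iff[OF ra] by blast
      then have "?e \<le> \<bar>bump ca ra x - bump cb rb x\<bar> powr \<tau>"
        using bump_ge_on_half_ball[OF rb True] \<tau> by (intro powr_mono2) auto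
      moreover have "C \<le> V x" using V_ge \<open>x \<in> ball cb rb\<close> .
      ultimately show ?thesis
        using True C by (simp add: mult_mono)
    qed (use V_nonneg in simp)
  qed
  also have "(\<integral>x. C * ?e * indicator (ball cb (rb/2)) x \<partial>lborel) = C * rb^2 / 4 * ?e * pi"
    using rb by (simp add: circle_area power_divide)
  finally show ?thesis
    unfolding LV_norm_def using C \<tau> by (intro powr_mono2) auto
qed

lemma not_Cauchy_subseq_if_separated:
  fixes c :: "nat \<Rightarrow> 'a::real_normed_vector" and d :: "nat \<Rightarrow> nat \<Rightarrow> real"
    and r :: "nat \<Rightarrow> nat"
  assumes c: "filterlim (\<lambda>n. norm (c n)) at_top sequentially"
    and separated: "\<And>a b. norm (c b) + R \<le> norm (c a) \<Longrightarrow> \<delta> \<le> d a b"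
    and "\<delta> > 0" and r: "strict_mono r"
  shows "\<not> (\<forall>e>0. \<exists>N. \<forall>p\<ge>N. \<forall>q\<ge>N. d (r p) (r q) < e)"
proof
  assume "\<forall>e>0. \<exists>N. \<forall>p\<ge>N. \<forall>q\<ge>N. d (r p) (r q) < e"
  then obtain N where N: "\<And>p q. p \<ge> N \<Longrightarrow> q \<ge> N \<Longrightarrow> d (r p) (r q) < \<delta>"
    using \<open>\<delta> > 0\<close> by blast
  have "filterlim (\<lambda>n. norm (c (r n))) at_top sequentially"
    using filterlim_compose[OF c filterlim_subseq[OF r]] .
  then obtain M where "\<And>p. p \<ge> M \<Longrightarrow> norm (c (r N)) + R \<le> norm (c (r p))"
    unfolding filterlim_at_top eventually_sequentially by blast
  then have "\<delta> \<le> d (r (max M N)) (r N)"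
    by (intro separated) simp
  with N[of "max M N" N] show False by simp
qed

definition adapted_bump :: "(real^2 \<Rightarrow> real) \<Rightarrow> real \<Rightarrow> real^2 \<Rightarrow> real^2 \<Rightarrow> real" where
  "adapted_bump V m c = bump c (m / sqrt (V c))"

lemma test_fun_adapted_bump:
  assumes "m > 0" and "V c > 0"
  shows "test_fun (adapted_bump V m c)"
  unfolding adapted_bump_def using assms by (intro test_fun_bump) simp

lemma H1V_norm_adapted_bump_le:
  assumes m: "m > 0" and V_pos: "V c > 0" and V_nonneg: "\<And>x. 0 \<le> V x"
    and V_le: "\<And>x. x \<in> ball c (m / sqrt (V c)) \<Longrightarrow> V x \<le> C * V c"
  shows "H1V_norm V (adapted_bump V m c) \<le> sqrt (pi * (128 + C * m^2))"
proof -
  have "C * V c * (m / sqrt (V c))^2 = C * m^2"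
    using V_pos by (simp add: power_divide)
  with H1V_norm_bump_le[of "m / sqrt (V c)" V c "C * V c"] show ?thesis
    using m V_pos V_nonneg V_le by (simp add: adapted_bump_def)
qed

lemma LV_norm_diff_adapted_bumps_ge:
  assumes v0: "v0 > 0" "\<And>x. v0 \<le> V x" and V_cont: "continuous_on UNIV V"
    and "\<tau> > 0" and m: "m > 0" and "c1 > 0"
    and V_ge: "\<And>x. x \<in> ball cb (m / sqrt (V cb)) \<Longrightarrow> c1 * V cb \<le> V x"
    and far: "norm cb + 2 * (m / sqrt v0) \<le> norm ca"
  shows "(c1 * m^2 / 4 * exp (-4/3) powr \<tau> * pi) powr (1/\<tau>)
         \<le> LV_norm V \<tau> (\<lambda>x. adapted_bump V m ca x - adapted_bump V m cb x)"
proof -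
  have V_pos: "V x > 0" for x using v0 by (rule less_le_trans)
  have radius_le: "m / sqrt (V x) \<le> m / sqrt v0" for x
    using v0 m V_pos[of x] by (intro divide_left_mono) auto
  have "m / sqrt (V ca) + m / sqrt (V cb) \<le> dist ca cb"
    using far radius_le[of ca] radius_le[of cb] norm_triangle_ineq2[of ca cb]
    by (simp add: dist_norm)
  then have "ball ca (m / sqrt (V ca)) \<inter> ball cb (m / sqrt (V cb)) = {}"
    by (rule disjoint_ballI)
  then have "(c1 * V cb * (m / sqrt (V cb))^2 / 4 * exp (-4/3) powr \<tau> * pi) powr (1/\<tau>)
      \<le> LV_norm V \<tau> (\<lambda>x. bump ca (m / sqrt (V ca)) x - bump cb (m / sqrt (V cb)) x)"
    using m V_pos[of ca] V_pos[of cb] \<open>c1 > 0\<close> less_imp_le[OF V_pos]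
    by (intro LV_norm_diff_bumps_ge[OF _ _ _ \<open>\<tau> > 0\<close> V_cont _ V_ge]) simp_all
  moreover have "c1 * V cb * (m / sqrt (V cb))^2 = c1 * m^2"
    using V_pos[of cb] by (simp add: power_divide)
  ultimately show ?thesis by (simp add: adapted_bump_def)
qed

theorem proposition2p7:
  fixes V :: "real^2 \<Rightarrow> real" and \<tau> :: real
  assumes "continuous_on UNIV V"
    and "\<exists>v0>0. \<forall>x. v0 \<le> V x"
    and "\<tau> > 2"
    and "cont_embedded V \<tau>"
    and "\<exists>c1>0. \<exists>c2>0. \<exists>m>0. \<exists>xs :: nat \<Rightarrow> real^2.
           filterlim (\<lambda>n. norm (xs n)) at_top sequentially \<and>
           (\<forall>n\<ge>1. \<forall>x\<in>ball (xs n) (m / sqrt (V (xs n))).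
              c1 * V (xs n) \<le> V x \<and> V x \<le> c2 * V (xs n))"
  shows "\<not> compactly_embedded V \<tau>"
proof
  assume compact: "compactly_embedded V \<tau>"
  obtain v0 where v0: "v0 > 0" "\<And>x. v0 \<le> V x" using assms(2) by blast
  have V_pos: "V x > 0" for x using v0 by (rule less_le_trans)
  obtain c1 c2 m xs where "c1 > 0" and "m > 0"
    and xs: "filterlim (\<lambda>n. norm (xs n)) at_top sequentially"
    and near: "\<And>n x. n \<ge> 1 \<Longrightarrow> x \<in> ball (xs n) (m / sqrt (V (xs n))) \<Longrightarrow>
                 c1 * V (xs n) \<le> V x \<and> V x \<le> c2 * V (xs n)"
    using assms(5) by blast
  define u where "u n = adapted_bump V m (xs (Suc n))" for n
  define \<delta> where "\<delta> = (c1 * m^2 / 4 * exp (-4/3) powr \<tau> * pi) powr (1/\<tau>)"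
  have "test_fun (u n)" for n
    unfolding u_def using \<open>m > 0\<close> V_pos by (rule test_fun_adapted_bump)
  moreover have "H1V_norm V (u n) \<le> sqrt (pi * (128 + c2 * m^2))" for n
    unfolding u_def
    by (rule H1V_norm_adapted_bump_le)
       (use \<open>m > 0\<close> V_pos less_imp_le[OF V_pos] near[of "Suc n"] in auto)
  ultimately obtain sub :: "nat \<Rightarrow> nat" where "strict_mono sub"
    and "\<forall>e>0. \<exists>N. \<forall>p\<ge>N. \<forall>q\<ge>N. LV_norm V \<tau> (\<lambda>x. u (sub p) x - u (sub q) x) < e"
    using compact unfolding compactly_embedded_def by blast
  moreover have "filterlim (\<lambda>n. norm (xs (Suc n))) at_top sequentially"
    using xs filterlim_sequentially_Suc[of "\<lambda>n. norm (xs n)"] by simp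
  moreover have "\<delta> \<le> LV_norm V \<tau> (\<lambda>x. u a x - u b x)"
    if "norm (xs (Suc b)) + 2 * (m / sqrt v0) \<le> norm (xs (Suc a))" for a b
    unfolding u_def \<delta>_def
    by (rule LV_norm_diff_adapted_bumps_ge[OF v0 assms(1) _ \<open>m > 0\<close> \<open>c1 > 0\<close> _ that])
       (use assms(3) near[of "Suc b"] in auto)
  moreover have "\<delta> > 0" using \<open>c1 > 0\<close> \<open>m > 0\<close> by (simp add: \<delta>_def)
  ultimately show False
    using not_Cauchy_subseq_if_separated[where c = "\<lambda>n. xs (Suc n)" and R = "2 * (m / sqrt v0)"
        and d = "\<lambda>a b. LV_norm V \<tau> (\<lambda>x. u a x - u b x)"]
    by blast
qed

end
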